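(* Let $H$ be a complex Hilbert space and let $f(z)=\sum_{n=0}^{\infty}a_nz^n$ be a power series with complex coefficients, convergent on the open disk $D(0,R)\subset\mathbb{C}$, $R>0$, and let $f_a(z):=\sum_{n=0}^{\infty}|a_n|z^n$. Let $A,B\in B(H)$ commute and satisfy $\|A\|^2<R$, $\|B\|^2<R$. Then both of the following chains of inequalities hold: \[ r\left[f(AB)\right]\leq \frac12 f_a(\|AB\|)+\frac12 f_a\left(\|A\|^{1/2}\|B\|^{1/2}\|AB\|^{1/2}\right) \leq \frac12 f_a(\|AB\|)+\frac12 f_a^{1/2}(\|A\|\|B\|)f_a^{1/2}(\|AB\|), \] and \[ r\left[f(AB)\right]\leq \frac12 f_a(\|AB\|)+\frac12\min\left\{f_a\left(\|A\|\|B^2\|^{1/2}\right),\ f_a\left(\|A^2\|^{1/2}\|B\|\right)\right\} \] \[ \leq \frac12 f_a(\|AB\|)+\frac12\min\left\{f_a^{1/2}(\|A\|^2)f_a^{1/2}(\|B^2\|),\ f_a^{1/2}(\|A^2\|)f_a^{1/2}(\|B\|^2)\right\}. \]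
   Context: $B(H)$ denotes the algebra of bounded linear operators on $H$, $\|\cdot\|$ the operator norm, and $r(T)$ the spectral radius of $T$. For an operator $T$ with $\|T\|<R$, $f(T):=\sum_{n=0}^\infty a_nT^n$. *)

theory Defs
  imports "HOL-Analysis.Analysis"
begin

text \<open>A complex Hilbert space, presented through its realification: a real Hilbert
  space (real inner product, complete) carrying a complex scalar multiplication that
  extends the real one and is norm-homogeneous.  The complex inner product is then
  recovered by polarization.\<close>
class complex_hilbert = real_inner + complete_space +
  fixes cscale :: "complex \<Rightarrow> 'a \<Rightarrow> 'a"
  assumes cscale_of_real: "cscale (complex_of_real r) x = r *\<^sub>R x"
    and cscale_add_left: "cscale (a + b) x = cscale a x + cscale b x"
    and cscale_add_right: "cscale a (x + y) = cscale a x + cscale a y"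
    and cscale_cscale: "cscale a (cscale b x) = cscale (a * b) x"
    and norm_cscale: "norm (cscale a x) = cmod a * norm x"

definition is_BH :: "('a::complex_hilbert \<Rightarrow>\<^sub>L 'a) \<Rightarrow> bool" where
  "is_BH T \<longleftrightarrow> (\<forall>c x. blinfun_apply T (cscale c x) = cscale c (blinfun_apply T x))"

definition cscaleL :: "complex \<Rightarrow> ('a::complex_hilbert \<Rightarrow>\<^sub>L 'a) \<Rightarrow> ('a \<Rightarrow>\<^sub>L 'a)" where
  "cscaleL c T = Blinfun (\<lambda>x. cscale c (blinfun_apply T x))"

definition opow :: "('a::real_normed_vector \<Rightarrow>\<^sub>L 'a) \<Rightarrow> nat \<Rightarrow> ('a \<Rightarrow>\<^sub>L 'a)" where
  "opow T n = ((\<lambda>S. T o\<^sub>L S) ^^ n) id_blinfun"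

definition op_series :: "(nat \<Rightarrow> complex) \<Rightarrow> ('a::complex_hilbert \<Rightarrow>\<^sub>L 'a) \<Rightarrow> ('a \<Rightarrow>\<^sub>L 'a)" where
  "op_series a T = (\<Sum>n. cscaleL (a n) (opow T n))"

definition abs_series :: "(nat \<Rightarrow> complex) \<Rightarrow> real \<Rightarrow> real" where
  "abs_series a t = (\<Sum>n. cmod (a n) * t ^ n)"

definition op_spectrum :: "('a::complex_hilbert \<Rightarrow>\<^sub>L 'a) \<Rightarrow> complex set" where
  "op_spectrum T = {l. \<not> (\<exists>S. is_BH S \<and>
      (\<forall>x. blinfun_apply S (blinfun_apply T x - cscale l x) = x) \<and>
      (\<forall>x. blinfun_apply T (blinfun_apply S x) - cscale l (blinfun_apply S x) = x))}"

text \<open>Spectral radius (with the convention 0 for an empty spectrum, i.e. H = {0}).\<close>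
definition spectral_radius :: "('a::complex_hilbert \<Rightarrow>\<^sub>L 'a) \<Rightarrow> real" where
  "spectral_radius T = (if op_spectrum T = {} then 0 else Sup (cmod ` op_spectrum T))"

end

theory Submission
  imports Defs
begin

text \<open>
  Write \<open>T = AB\<close>. Every \<open>\<lambda>\<close> in the spectrum of \<open>f(T)\<close> satisfies \<open>|\<lambda>| \<le> f\<^sub>a(s)\<close> as soon as
  the powers of \<open>T\<close> grow at most like \<open>s'\<^sup>k\<close> for every \<open>s' > s\<close>: the coefficients of \<open>f(T)\<^sup>n\<close>
  are those of \<open>f\<^sup>n\<close>, which gives \<open>\<parallel>f(T)\<^sup>n\<parallel> \<le> C f\<^sub>a(s')\<^sup>n\<close>, so the Neumann series
  \<open>-\<Sum> \<lambda>\<^sup>-\<^sup>n\<^sup>-\<^sup>1 f(T)\<^sup>n\<close> inverts \<open>f(T) - \<lambda>\<close> when \<open>|\<lambda>| > f\<^sub>a(s')\<close>; let \<open>s' \<rightarrow> s\<close> by continuity of \<open>f\<^sub>a\<close>.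
  Admissible growth rates are \<open>\<parallel>AB\<parallel>\<close>, and, by commutativity
  \<open>(AB)\<^sup>2\<^sup>m = A\<^sup>2\<^sup>m (B\<^sup>2)\<^sup>m\<close>, also \<open>\<parallel>A\<parallel> \<parallel>B\<^sup>2\<parallel>\<^sup>1\<^sup>/\<^sup>2\<close> and symmetrically \<open>\<parallel>A\<^sup>2\<parallel>\<^sup>1\<^sup>/\<^sup>2 \<parallel>B\<parallel>\<close>.
  The remaining inequalities are monotonicity of \<open>f\<^sub>a\<close> and the Cauchy--Schwarz inequality
  \<open>f\<^sub>a(\<surd>(xy)) \<le> f\<^sub>a(x)\<^sup>1\<^sup>/\<^sup>2 f\<^sub>a(y)\<^sup>1\<^sup>/\<^sup>2\<close>.
\<close>

instance complex_hilbert \<subseteq> banach ..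

subsection \<open>Complex scalar multiplication\<close>

lemma bounded_linear_cscale: "bounded_linear (cscale c :: 'a::complex_hilbert \<Rightarrow> 'a)"
proof (rule bounded_linear_intro[where K="cmod c"])
  fix x y :: 'a show "cscale c (x + y) = cscale c x + cscale c y" by (rule cscale_add_right)
next
  fix r :: real and x :: 'a
  show "cscale c (r *\<^sub>R x) = r *\<^sub>R cscale c x"
    by (simp add: cscale_cscale mult.commute flip: cscale_of_real)
next
  fix x :: 'a show "norm (cscale c x) \<le> norm x * cmod c" by (simp add: norm_cscale mult.commute)
qed

lemma cscale_1 [simp]: "cscale 1 x = x"
  using cscale_of_real[of 1 x] by simp

lemma cscaleL_apply [simp]: "blinfun_apply (cscaleL c T) x = cscale c (blinfun_apply T x)"
proof -
  have "bounded_linear (\<lambda>x. cscale c (blinfun_apply T x))"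
    by (rule bounded_linear_compose[OF bounded_linear_cscale blinfun.bounded_linear_right])
  then show ?thesis unfolding cscaleL_def by (simp add: bounded_linear_Blinfun_apply)
qed

lemma norm_cscaleL: "norm (cscaleL c T) \<le> cmod c * norm T"
  by (rule norm_blinfun_bound) (auto simp: norm_cscale mult.assoc intro!: mult_left_mono norm_blinfun)

lemma cscaleL_0 [simp]: "cscaleL 0 T = 0"
  by (rule blinfun_eqI) (simp add: cscale_of_real[of 0, simplified])

lemma cscaleL_sum: "cscaleL (\<Sum>i\<in>I. c i) T = (\<Sum>i\<in>I. cscaleL (c i) T)"
proof (induction I rule: infinite_finite_induct)
  case (insert i I)
  have "cscaleL (c i + d) T = cscaleL (c i) T + cscaleL d T" for d
    by (rule blinfun_eqI) (simp add: cscale_add_left blinfun.add_left)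
  with insert show ?case by simp
qed simp_all

lemma cscaleL_diff: "cscaleL c (X - Y) = cscaleL c X - cscaleL c Y"
  by (rule blinfun_eqI)
    (simp add: blinfun.diff_left linear_diff[OF bounded_linear.linear[OF bounded_linear_cscale]])

lemma cscaleL_1 [simp]: "cscaleL 1 T = T"
  by (rule blinfun_eqI) simp

lemma cscaleL_cscaleL [simp]: "cscaleL c (cscaleL d T) = cscaleL (c * d) T"
  by (rule blinfun_eqI) (simp add: cscale_cscale)

lemma cscaleL_blinfun_compose: "cscaleL c X o\<^sub>L Y = cscaleL c (X o\<^sub>L Y)"
  by (rule blinfun_eqI) simp

lemma blinfun_compose_cscaleL: "is_BH X \<Longrightarrow> X o\<^sub>L cscaleL c Y = cscaleL c (X o\<^sub>L Y)"
  by (rule blinfun_eqI) (simp add: is_BH_def)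

lemma is_BH_compose: "is_BH X \<Longrightarrow> is_BH Y \<Longrightarrow> is_BH (X o\<^sub>L Y)"
  by (simp add: is_BH_def)

lemma is_BH_id: "is_BH id_blinfun"
  by (simp add: is_BH_def)

lemma is_BH_cscaleL: "is_BH X \<Longrightarrow> is_BH (cscaleL c X)"
  by (simp add: is_BH_def cscale_cscale mult.commute)

lemma is_BH_uminus: "is_BH X \<Longrightarrow> is_BH (- X)"
  by (simp add: is_BH_def blinfun.minus_left linear_neg[OF bounded_linear.linear[OF bounded_linear_cscale]])

lemma is_BH_suminf:
  fixes X :: "nat \<Rightarrow> 'a::complex_hilbert \<Rightarrow>\<^sub>L 'a"
  assumes "summable X" and "\<And>n. is_BH (X n)"
  shows "is_BH (suminf X)"
  unfolding is_BH_def
proof (intro allI)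
  fix c x
  have apply_suminf: "blinfun_apply (suminf X) y = (\<Sum>n. blinfun_apply (X n) y)" for y
    using bounded_linear.suminf[OF blinfun.bounded_linear_left assms(1)] by simp
  have "summable (\<lambda>n. blinfun_apply (X n) x)"
    using bounded_linear.summable[OF blinfun.bounded_linear_left assms(1)] by simp
  then have "(\<Sum>n. cscale c (blinfun_apply (X n) x)) = cscale c (\<Sum>n. blinfun_apply (X n) x)"
    by (rule bounded_linear.suminf[OF bounded_linear_cscale, symmetric])
  then show "blinfun_apply (suminf X) (cscale c x) = cscale c (blinfun_apply (suminf X) x)"
    using assms(2) by (simp add: apply_suminf is_BH_def)
qed

subsection \<open>Operator powers\<close>

lemma blinfun_compose_assoc: "(X o\<^sub>L Y) o\<^sub>L Z = X o\<^sub>L (Y o\<^sub>L Z)"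
  by (rule blinfun_eqI) simp

lemma blinfun_compose_id_left [simp]: "id_blinfun o\<^sub>L X = X"
  by (rule blinfun_eqI) simp

lemma blinfun_compose_id_right [simp]: "X o\<^sub>L id_blinfun = X"
  by (rule blinfun_eqI) simp

lemma opow_0 [simp]: "opow T 0 = id_blinfun"
  by (simp add: opow_def)

lemma opow_Suc: "opow T (Suc n) = T o\<^sub>L opow T n"
  by (simp add: opow_def)

lemma is_BH_opow: "is_BH T \<Longrightarrow> is_BH (opow T n)"
  by (induction n) (auto simp: opow_Suc is_BH_id is_BH_compose)

lemma norm_opow_le: "norm (opow T n) \<le> norm T ^ n"
proof (induction n)
  case 0
  then show ?case by (simp add: norm_blinfun_id_le)
next
  case (Suc n)
  have "norm (opow T (Suc n)) \<le> norm T * norm (opow T n)"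
    unfolding opow_Suc by (rule norm_blinfun_compose)
  also have "\<dots> \<le> norm T * norm T ^ n"
    by (intro mult_left_mono Suc) auto
  finally show ?case by simp
qed

lemma opow_add: "opow T (m + n) = opow T m o\<^sub>L opow T n"
  by (induction m) (simp_all add: opow_Suc blinfun_compose_assoc)

lemma opow_Suc': "opow T (Suc n) = opow T n o\<^sub>L T"
  using opow_add[of T n 1] by (simp add: opow_Suc)

lemma opow_mult2: "opow T (2 * m) = opow (T o\<^sub>L T) m"
  by (induction m) (simp_all add: opow_Suc blinfun_compose_assoc flip: opow_Suc')

lemma commute_opow:
  assumes "A o\<^sub>L B = B o\<^sub>L A"
  shows "A o\<^sub>L opow B n = opow B n o\<^sub>L A"
proof (induction n)
  case (Suc n)
  have "A o\<^sub>L opow B (Suc n) = B o\<^sub>L (A o\<^sub>L opow B n)"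
    using assms by (simp add: opow_Suc flip: blinfun_compose_assoc)
  with Suc show ?case by (simp add: opow_Suc blinfun_compose_assoc)
qed simp

lemma opow_compose:
  assumes "A o\<^sub>L B = B o\<^sub>L A"
  shows "opow (A o\<^sub>L B) n = opow A n o\<^sub>L opow B n"
proof (induction n)
  case (Suc n)
  have "B o\<^sub>L opow A n = opow A n o\<^sub>L B"
    using commute_opow[OF assms[symmetric]] .
  with Suc show ?case by (simp add: opow_Suc blinfun_compose_assoc flip: blinfun_compose_assoc[of B])
qed simp

lemma sqrt_norm_compose_self_le: "sqrt (norm (T o\<^sub>L T)) \<le> norm T"
  using norm_blinfun_compose[of T T] by (intro real_le_lsqrt) (simp_all add: power2_eq_square)

subsection \<open>The majorant series \<open>f\<^sub>a\<close>\<close>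

lemma mult_less_if_power2_less:
  fixes x y R :: real
  assumes "0 \<le> x" "0 \<le> y" "x ^ 2 < R" "y ^ 2 < R"
  shows "x * y < R"
  using sum_squares_bound[of x y] assms by (simp add: power2_eq_square)

lemma le_sqrt_mult_le:
  fixes t p :: real
  assumes "0 \<le> t" "t \<le> p"
  shows "t \<le> sqrt (p * t)" and "sqrt (p * t) \<le> p"
  using assms by (auto intro!: real_le_rsqrt real_le_lsqrt mult_mono simp: power2_eq_square)

lemma summable_abs_series:
  assumes conv: "\<And>z. cmod z < R \<Longrightarrow> summable (\<lambda>n. a n * z ^ n)"
    and t: "0 \<le> t" "t < R"
  shows "summable (\<lambda>n. cmod (a n) * t ^ n)"
proof -
  obtain t' where t': "t < t'" "t' < R"
    using t(2) dense by blast
  have "summable (\<lambda>n. a n * complex_of_real t' ^ n)"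
    by (rule conv) (use t t' in simp)
  then have "summable (\<lambda>n. norm (a n * complex_of_real t ^ n))"
    by (rule powser_insidea) (use t t' in simp)
  then show ?thesis
    using t by (simp add: norm_mult norm_power)
qed

lemma abs_series_nonneg:
  "summable (\<lambda>n. cmod (a n) * t ^ n) \<Longrightarrow> 0 \<le> t \<Longrightarrow> 0 \<le> abs_series a t"
  unfolding abs_series_def by (intro suminf_nonneg) auto

lemma abs_series_mono:
  assumes conv: "\<And>z. cmod z < R \<Longrightarrow> summable (\<lambda>n. a n * z ^ n)"
    and "0 \<le> s" "s \<le> t" "t < R"
  shows "abs_series a s \<le> abs_series a t"
  unfolding abs_series_def using assms(2-)
  by (intro suminf_le summable_abs_series[OF conv]) (auto intro!: mult_left_mono power_mono)

lemma isCont_abs_series: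
  assumes conv: "\<And>z. cmod z < R \<Longrightarrow> summable (\<lambda>n. a n * z ^ n)"
    and t: "0 \<le> t" "t < R"
  shows "isCont (abs_series a) t"
proof -
  have "summable (\<lambda>n. cmod (a n) * ((t + R) / 2) ^ n)"
    by (rule summable_abs_series[OF conv]) (use t in auto)
  then have "isCont (\<lambda>x. \<Sum>n. cmod (a n) * x ^ n) t"
    by (rule isCont_powser) (use t in auto)
  then show ?thesis
    by (simp add: abs_series_def[abs_def])
qed

lemma suminf_mult_le_sqrt:
  fixes u v :: "nat \<Rightarrow> real"
  assumes "\<And>n. 0 \<le> u n" "\<And>n. 0 \<le> v n"
    and "summable (\<lambda>n. u n * v n)" "summable (\<lambda>n. u n ^ 2)" "summable (\<lambda>n. v n ^ 2)"
  shows "(\<Sum>n. u n * v n) \<le> sqrt (\<Sum>n. u n ^ 2) * sqrt (\<Sum>n. v n ^ 2)"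
proof (rule suminf_le_const[OF assms(3)])
  fix N
  have "(\<Sum>n<N. u n * v n)\<^sup>2 \<le> (\<Sum>n<N. (u n)\<^sup>2) * (\<Sum>n<N. (v n)\<^sup>2)"
    by (rule Cauchy_Schwarz_ineq_sum)
  also have "\<dots> \<le> (\<Sum>n. u n ^ 2) * (\<Sum>n. v n ^ 2)"
    using assms by (intro mult_mono sum_le_suminf suminf_nonneg sum_nonneg) auto
  finally have "\<bar>\<Sum>n<N. u n * v n\<bar> \<le> sqrt ((\<Sum>n. u n ^ 2) * (\<Sum>n. v n ^ 2))"
    by (intro real_le_rsqrt) simp
  then show "(\<Sum>n<N. u n * v n) \<le> sqrt (\<Sum>n. u n ^ 2) * sqrt (\<Sum>n. v n ^ 2)"
    by (simp add: real_sqrt_mult)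
qed

lemma abs_series_sqrt_mult_le:
  assumes conv: "\<And>z. cmod z < R \<Longrightarrow> summable (\<lambda>n. a n * z ^ n)"
    and xy: "0 \<le> x" "x < R" "0 \<le> y" "y < R"
  shows "abs_series a (sqrt (x * y)) \<le> sqrt (abs_series a x) * sqrt (abs_series a y)"
proof -
  define u where "u n = sqrt (cmod (a n) * x ^ n)" for n
  define v where "v n = sqrt (cmod (a n) * y ^ n)" for n
  have "sqrt (x * y) \<le> max x y"
    using xy by (intro real_le_lsqrt) (auto intro: mult_mono simp: power2_eq_square)
  then have "summable (\<lambda>n. cmod (a n) * sqrt (x * y) ^ n)"
    using xy by (intro summable_abs_series[OF conv]) auto
  moreover have uv: "cmod (a n) * sqrt (x * y) ^ n = u n * v n" for n
    using xy by (simp add: u_def v_def real_sqrt_power real_sqrt_mult power_mult_distrib)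
  ultimately have "summable (\<lambda>n. u n * v n)"
    by simp
  moreover have u2: "u n ^ 2 = cmod (a n) * x ^ n" and v2: "v n ^ 2 = cmod (a n) * y ^ n" for n
    using xy by (simp_all add: u_def v_def)
  ultimately have "(\<Sum>n. u n * v n) \<le> sqrt (\<Sum>n. u n ^ 2) * sqrt (\<Sum>n. v n ^ 2)"
    using xy by (intro suminf_mult_le_sqrt) (simp_all add: u_def v_def summable_abs_series[OF conv])
  then show ?thesis
    by (simp add: abs_series_def uv u2 v2)
qed

lemma abs_series_Cauchy_product:
  assumes s: "0 \<le> s"
    and sa: "summable (\<lambda>k. cmod (a k) * s ^ k)" and sc: "summable (\<lambda>k. cmod (c k) * s ^ k)"
  defines "d \<equiv> \<lambda>m. \<Sum>i\<le>m. a i * c (m - i)"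
  shows "summable (\<lambda>m. cmod (d m) * s ^ m)"
    and "abs_series d s \<le> abs_series a s * abs_series c s"
proof -
  define w where "w m = (\<Sum>i\<le>m. (cmod (a i) * s ^ i) * (cmod (c (m - i)) * s ^ (m - i)))" for m
  have w: "w sums (abs_series a s * abs_series c s)"
    unfolding w_def abs_series_def using sa sc s by (intro Cauchy_product_sums) simp_all
  have d_le_w: "cmod (d m) * s ^ m \<le> w m" for m
  proof -
    have "cmod (d m) * s ^ m \<le> (\<Sum>i\<le>m. cmod (a i) * cmod (c (m - i))) * s ^ m"
      unfolding d_def using s
      by (intro mult_right_mono order_trans[OF norm_sum]) (simp_all add: norm_mult)
    also have "\<dots> = w m"
      unfolding w_def sum_distrib_right
    proof (intro sum.cong refl)
      fix i assume "i \<in> {..m}"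
      then have "s ^ m = s ^ i * s ^ (m - i)"
        by (simp flip: power_add)
      then show "cmod (a i) * cmod (c (m - i)) * s ^ m
          = cmod (a i) * s ^ i * (cmod (c (m - i)) * s ^ (m - i))"
        by (simp add: mult_ac)
    qed
    finally show ?thesis .
  qed
  show sd: "summable (\<lambda>m. cmod (d m) * s ^ m)"
    by (rule summable_comparison_test'[OF sums_summable[OF w]]) (use d_le_w s in simp)
  have "(\<Sum>m. cmod (d m) * s ^ m) \<le> suminf w"
    by (rule suminf_le[OF d_le_w sd]) (use w in \<open>simp add: sums_iff\<close>)
  with w show "abs_series d s \<le> abs_series a s * abs_series c s"
    by (simp add: abs_series_def sums_iff)
qed

subsection \<open>Operator power series\<close>

lemma bounded_bilinear_Cauchy_product_sums:
  fixes a :: "nat \<Rightarrow> 'a::banach" and b :: "nat \<Rightarrow> 'b::banach" and pr :: "'a \<Rightarrow> 'b \<Rightarrow> 'c::real_normed_vector"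
  assumes bl: "bounded_bilinear pr"
    and a: "summable (\<lambda>k. norm (a k))" and b: "summable (\<lambda>k. norm (b k))"
  shows "(\<lambda>k. \<Sum>i\<le>k. pr (a i) (b (k - i))) sums pr (\<Sum>k. a k) (\<Sum>k. b k)"
proof -
  interpret bounded_bilinear pr by (rule bl)
  obtain K where K: "\<And>x y. norm (pr x y) \<le> norm x * norm y * K"
    using bounded by blast
  define S1 where "S1 n = {..<n} \<times> {..<n}" for n :: nat
  define S2 where "S2 n = {(i, j). i + j < n}" for n :: nat
  have S2_S1: "S2 n \<subseteq> S1 n" and fin: "finite (S1 n)" for n
    by (auto simp: S1_def S2_def)
  let ?g = "\<lambda>(i, j). pr (a i) (b j)" and ?f = "\<lambda>(i, j). norm (a i) * norm (b j)"
  let ?L = "(\<Sum>k. norm (a k)) * (\<Sum>k. norm (b k))"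
  have "(\<lambda>n. pr (\<Sum>k<n. a k) (\<Sum>k<n. b k)) \<longlonglongrightarrow> pr (\<Sum>k. a k) (\<Sum>k. b k)"
    by (intro tendsto summable_LIMSEQ summable_norm_cancel[OF a] summable_norm_cancel[OF b])
  then have g_S1: "(\<lambda>n. sum ?g (S1 n)) \<longlonglongrightarrow> pr (\<Sum>k. a k) (\<Sum>k. b k)"
    unfolding S1_def sum_left unfolding sum_right by (simp only: sum.cartesian_product)
  have "(\<lambda>n. (\<Sum>k<n. norm (a k)) * (\<Sum>k<n. norm (b k))) \<longlonglongrightarrow> ?L"
    using a b by (intro tendsto_mult summable_LIMSEQ)
  then have f_S1: "(\<lambda>n. sum ?f (S1 n)) \<longlonglongrightarrow> ?L"
    by (simp add: S1_def sum_product sum.cartesian_product)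
  have "(\<lambda>k. \<Sum>i\<le>k. norm (a i) * norm (b (k - i))) sums ?L"
    using a b by (intro Cauchy_product_sums) simp_all
  then have f_S2: "(\<lambda>n. sum ?f (S2 n)) \<longlonglongrightarrow> ?L"
    by (simp add: S2_def sums_def sum.triangle_reindex)
  have "(\<lambda>n. K * (sum ?f (S1 n) - sum ?f (S2 n))) \<longlonglongrightarrow> K * (?L - ?L)"
    by (intro tendsto_intros f_S1 f_S2)
  then have lim0: "(\<lambda>n. K * (sum ?f (S1 n) - sum ?f (S2 n))) \<longlonglongrightarrow> 0"
    by simp
  have bound: "norm (sum ?g (S1 n) - sum ?g (S2 n)) \<le> K * (sum ?f (S1 n) - sum ?f (S2 n))" for n
  proof -
    have "norm (sum ?g (S1 n) - sum ?g (S2 n)) = norm (sum ?g (S1 n - S2 n))"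
      by (simp add: sum_diff fin S2_S1)
    also have "\<dots> \<le> (\<Sum>p\<in>S1 n - S2 n. K * ?f p)"
      by (intro order_trans[OF norm_sum] sum_mono) (use K in \<open>auto simp: mult_ac\<close>)
    also have "\<dots> = K * (sum ?f (S1 n) - sum ?f (S2 n))"
      by (simp add: sum_diff fin S2_S1 flip: sum_distrib_left)
    finally show ?thesis .
  qed
  have "(\<lambda>n. sum ?g (S1 n) - sum ?g (S2 n)) \<longlonglongrightarrow> 0"
    using bound by (intro Lim_null_comparison[OF always_eventually lim0]) blast
  from tendsto_diff[OF g_S1 this] have "(\<lambda>n. sum ?g (S2 n)) \<longlonglongrightarrow> pr (\<Sum>k. a k) (\<Sum>k. b k)"
    by simp
  then show ?thesis
    by (simp add: S2_def sums_def sum.triangle_reindex)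
qed
lemma summable_norm_op_series_terms:
  fixes T :: "'a::complex_hilbert \<Rightarrow>\<^sub>L 'a"
  assumes bound: "\<And>k. norm (opow T k) \<le> C * s ^ k"
    and sc: "summable (\<lambda>k. cmod (c k) * s ^ k)"
  shows "summable (\<lambda>k. norm (cscaleL (c k) (opow T k)))"
proof (rule summable_comparison_test'[OF summable_mult[OF sc, of C]])
  fix k
  have "norm (cscaleL (c k) (opow T k)) \<le> cmod (c k) * norm (opow T k)"
    by (rule norm_cscaleL)
  also have "\<dots> \<le> C * (cmod (c k) * s ^ k)"
    using mult_left_mono[OF bound[of k] norm_ge_zero[of "c k"]] by (simp add: mult_ac)
  finally show "norm (norm (cscaleL (c k) (opow T k))) \<le> C * (cmod (c k) * s ^ k)"
    by simp
qed

lemma norm_op_series_le: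
  fixes T :: "'a::complex_hilbert \<Rightarrow>\<^sub>L 'a"
  assumes bound: "\<And>k. norm (opow T k) \<le> C * s ^ k"
    and sc: "summable (\<lambda>k. cmod (c k) * s ^ k)"
  shows "norm (op_series c T) \<le> C * abs_series c s"
proof -
  have summable: "summable (\<lambda>k. norm (cscaleL (c k) (opow T k)))"
    by (rule summable_norm_op_series_terms[OF bound sc])
  have "norm (op_series c T) \<le> (\<Sum>k. norm (cscaleL (c k) (opow T k)))"
    unfolding op_series_def by (rule summable_norm[OF summable])
  also have "\<dots> \<le> (\<Sum>k. C * (cmod (c k) * s ^ k))"
  proof (rule suminf_le[OF _ summable summable_mult[OF sc]])
    fix k
    have "norm (cscaleL (c k) (opow T k)) \<le> cmod (c k) * norm (opow T k)"
      by (rule norm_cscaleL)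
    also have "\<dots> \<le> C * (cmod (c k) * s ^ k)"
      using mult_left_mono[OF bound[of k] norm_ge_zero[of "c k"]] by (simp add: mult_ac)
    finally show "norm (cscaleL (c k) (opow T k)) \<le> C * (cmod (c k) * s ^ k)" .
  qed
  also have "\<dots> = C * abs_series c s"
    unfolding abs_series_def by (rule suminf_mult[OF sc])
  finally show ?thesis .
qed

lemma is_BH_op_series:
  fixes T :: "'a::complex_hilbert \<Rightarrow>\<^sub>L 'a"
  assumes "is_BH T" and bound: "\<And>k. norm (opow T k) \<le> C * s ^ k"
    and sc: "summable (\<lambda>k. cmod (c k) * s ^ k)"
  shows "is_BH (op_series c T)"
proof -
  have "summable (\<lambda>k. cscaleL (c k) (opow T k))"
    by (rule summable_norm_cancel[OF summable_norm_op_series_terms[OF bound sc]])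
  then show ?thesis
    unfolding op_series_def by (rule is_BH_suminf) (intro is_BH_cscaleL is_BH_opow assms(1))
qed

lemma op_series_compose:
  fixes T :: "'a::complex_hilbert \<Rightarrow>\<^sub>L 'a"
  assumes BH: "is_BH T" and bound: "\<And>k. norm (opow T k) \<le> C * s ^ k"
    and sa: "summable (\<lambda>k. cmod (a k) * s ^ k)" and sc: "summable (\<lambda>k. cmod (c k) * s ^ k)"
  shows "op_series a T o\<^sub>L op_series c T = op_series (\<lambda>m. \<Sum>i\<le>m. a i * c (m - i)) T"
proof -
  have "(\<lambda>m. \<Sum>i\<le>m. cscaleL (a i) (opow T i) o\<^sub>L cscaleL (c (m - i)) (opow T (m - i)))
      sums (op_series a T o\<^sub>L op_series c T)"
    unfolding op_series_def
    by (intro bounded_bilinear_Cauchy_product_sums bounded_bilinear_blinfun_compose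
        summable_norm_op_series_terms[OF bound sa] summable_norm_op_series_terms[OF bound sc])
  moreover have "(\<Sum>i\<le>m. cscaleL (a i) (opow T i) o\<^sub>L cscaleL (c (m - i)) (opow T (m - i)))
      = cscaleL (\<Sum>i\<le>m. a i * c (m - i)) (opow T m)" for m
    unfolding cscaleL_sum
    by (intro sum.cong refl)
      (simp add: cscaleL_blinfun_compose blinfun_compose_cscaleL is_BH_opow[OF BH] flip: opow_add)
  ultimately show ?thesis
    by (simp add: op_series_def sums_iff)
qed

lemma op_series_opow:
  fixes T :: "'a::complex_hilbert \<Rightarrow>\<^sub>L 'a"
  assumes BH: "is_BH T" and bound: "\<And>k. norm (opow T k) \<le> C * s ^ k" and s: "0 \<le> s"
    and sa: "summable (\<lambda>k. cmod (a k) * s ^ k)"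
  shows "\<exists>c. opow (op_series a T) n = op_series c T \<and> summable (\<lambda>k. cmod (c k) * s ^ k)
           \<and> abs_series c s \<le> abs_series a s ^ n"
proof (induction n)
  case 0
  define \<delta> :: "nat \<Rightarrow> complex" where "\<delta> k = (if k = 0 then 1 else 0)" for k
  have "(\<lambda>k. cscaleL (\<delta> k) (opow T k)) = (\<lambda>k. if k = 0 then opow T k else 0)"
    by (rule ext) (simp add: \<delta>_def)
  then have "op_series \<delta> T = id_blinfun"
    using sums_single[where i=0 and f="opow T"] by (simp add: op_series_def sums_iff)
  moreover have "(\<lambda>k. cmod (\<delta> k) * s ^ k) = (\<lambda>k. if k = 0 then 1 else 0)"
    by (rule ext) (simp add: \<delta>_def)
  moreover have "(\<lambda>k::nat. if k = 0 then 1 else 0) sums (1::real)"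
    using sums_single[where i=0 and f="\<lambda>_. 1::real"] by simp
  ultimately show ?case
    by (intro exI[of _ \<delta>]) (simp add: abs_series_def sums_iff)
next
  case (Suc n)
  then obtain c where c: "opow (op_series a T) n = op_series c T"
    and sc: "summable (\<lambda>k. cmod (c k) * s ^ k)" and c_le: "abs_series c s \<le> abs_series a s ^ n"
    by blast
  define d where "d m = (\<Sum>i\<le>m. a i * c (m - i))" for m
  have "opow (op_series a T) (Suc n) = op_series d T"
    using op_series_compose[OF BH bound sa sc] by (simp add: opow_Suc c d_def[abs_def])
  moreover have "summable (\<lambda>k. cmod (d k) * s ^ k)"
    unfolding d_def by (rule abs_series_Cauchy_product(1)[OF s sa sc])
  moreover have "abs_series d s \<le> abs_series a s ^ Suc n"
  proof -
    have "abs_series d s \<le> abs_series a s * abs_series c s"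
      unfolding d_def by (rule abs_series_Cauchy_product(2)[OF s sa sc])
    also have "\<dots> \<le> abs_series a s * abs_series a s ^ n"
      by (rule mult_left_mono[OF c_le abs_series_nonneg[OF sa s]])
    finally show ?thesis
      by simp
  qed
  ultimately show ?case
    by blast
qed

lemma norm_opow_op_series_le:
  fixes T :: "'a::complex_hilbert \<Rightarrow>\<^sub>L 'a"
  assumes BH: "is_BH T" and bound: "\<And>k. norm (opow T k) \<le> C * s ^ k" and s: "0 \<le> s"
    and sa: "summable (\<lambda>k. cmod (a k) * s ^ k)"
  shows "norm (opow (op_series a T) n) \<le> C * abs_series a s ^ n"
proof -
  have C: "0 \<le> C"
    using order_trans[OF norm_ge_zero bound[of 0]] by simp
  obtain c where c: "opow (op_series a T) n = op_series c T"
    and sc: "summable (\<lambda>k. cmod (c k) * s ^ k)" and c_le: "abs_series c s \<le> abs_series a s ^ n"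
    using op_series_opow[OF BH bound s sa] by blast
  have "norm (op_series c T) \<le> C * abs_series c s"
    by (rule norm_op_series_le[OF bound sc])
  also have "\<dots> \<le> C * abs_series a s ^ n"
    by (rule mult_left_mono[OF c_le C])
  finally show ?thesis
    unfolding c .
qed

subsection \<open>Neumann series\<close>

lemma not_in_op_spectrum:
  fixes F S :: "'a::complex_hilbert \<Rightarrow>\<^sub>L 'a"
  assumes "is_BH S"
    and "S o\<^sub>L (F - cscaleL l id_blinfun) = id_blinfun"
    and "(F - cscaleL l id_blinfun) o\<^sub>L S = id_blinfun"
  shows "l \<notin> op_spectrum F"
proof -
  have "blinfun_apply S (blinfun_apply F x - cscale l x) = x"
    and "blinfun_apply F (blinfun_apply S x) - cscale l (blinfun_apply S x) = x" for x
    using arg_cong[OF assms(2), of "\<lambda>X. blinfun_apply X x"] arg_cong[OF assms(3), of "\<lambda>X. blinfun_apply X x"]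
    by (simp_all add: blinfun.diff_left)
  with assms(1) show ?thesis
    unfolding op_spectrum_def by blast
qed

lemma telescoping_suminf_inverse:
  fixes G :: "'a::real_normed_vector \<Rightarrow>\<^sub>L 'a"
  assumes Z: "summable Z" and U: "U \<longlonglongrightarrow> 0" "U 0 = id_blinfun"
    and ZG: "\<And>n. Z n o\<^sub>L G = U (Suc n) - U n" and GZ: "\<And>n. G o\<^sub>L Z n = U (Suc n) - U n"
  shows "- suminf Z o\<^sub>L G = id_blinfun" and "G o\<^sub>L - suminf Z = id_blinfun"
proof -
  note compose = bounded_bilinear_blinfun_compose
  have telescope: "(\<lambda>n. U (Suc n) - U n) sums - id_blinfun"
    using telescope_sums[OF U(1)] U(2) by simp
  have "(\<lambda>n. Z n o\<^sub>L G) sums (suminf Z o\<^sub>L G)"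
    by (rule bounded_linear.sums[OF bounded_bilinear.bounded_linear_left[OF compose] summable_sums[OF Z]])
  then have "suminf Z o\<^sub>L G = - id_blinfun"
    using telescope by (simp add: ZG sums_unique2)
  moreover have "(\<lambda>n. G o\<^sub>L Z n) sums (G o\<^sub>L suminf Z)"
    by (rule bounded_linear.sums[OF bounded_bilinear.bounded_linear_right[OF compose] summable_sums[OF Z]])
  then have "G o\<^sub>L suminf Z = - id_blinfun"
    using telescope by (simp add: GZ sums_unique2)
  ultimately show "- suminf Z o\<^sub>L G = id_blinfun" "G o\<^sub>L - suminf Z = id_blinfun"
    by (simp_all add: bounded_bilinear.minus_left bounded_bilinear.minus_right compose)
qed

lemma op_spectrum_cmod_le:
  fixes F :: "'a::complex_hilbert \<Rightarrow>\<^sub>L 'a"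
  assumes BH: "is_BH F" and bound: "\<And>n. norm (opow F n) \<le> C * M ^ n" and M: "0 \<le> M"
    and l: "l \<in> op_spectrum F"
  shows "cmod l \<le> M"
proof (rule ccontr)
  assume "\<not> cmod l \<le> M"
  then have lM: "M < cmod l" and l0: "l \<noteq> 0"
    using M by auto
  define \<mu> where "\<mu> = inverse l"
  define q where "q = M / cmod l"
  have \<mu>: "\<mu> * \<mu> ^ n * l = \<mu> ^ n" "l * (\<mu> * \<mu> ^ n) = \<mu> ^ n" for n
    using l0 by (simp_all add: \<mu>_def field_simps)
  have cmod_\<mu>: "cmod \<mu> = 1 / cmod l"
    by (simp add: \<mu>_def norm_inverse divide_inverse)
  have "0 < cmod l"
    using lM M by linarith
  then have q: "0 \<le> q" "q < 1"
    using lM M by (simp_all add: q_def)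
  define G where "G = F - cscaleL l id_blinfun"
  define U where "U n = cscaleL (\<mu> ^ n) (opow F n)" for n
  define Z where "Z n = cscaleL (\<mu> ^ Suc n) (opow F n)" for n
  have norm_U: "norm (U n) \<le> C * q ^ n" for n
  proof -
    have "norm (U n) \<le> cmod \<mu> ^ n * norm (opow F n)"
      unfolding U_def using norm_cscaleL by (metis norm_power)
    also have "\<dots> \<le> cmod \<mu> ^ n * (C * M ^ n)"
      by (intro mult_left_mono bound) simp
    finally show ?thesis
      by (simp add: q_def cmod_\<mu> power_divide mult_ac)
  qed
  have "U \<longlonglongrightarrow> 0"
    using q by (intro Lim_null_comparison[OF always_eventually[OF allI[OF norm_U]]]
        tendsto_mult_right_zero LIMSEQ_power_zero) simp
  have "summable (\<lambda>n. cmod \<mu> * (C * q ^ n))"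
    using q by (intro summable_mult summable_geometric) simp
  moreover have "norm (Z n) \<le> cmod \<mu> * (C * q ^ n)" for n
  proof -
    have "norm (Z n) = norm (cscaleL \<mu> (U n))"
      by (simp add: Z_def U_def)
    also have "\<dots> \<le> cmod \<mu> * norm (U n)"
      by (rule norm_cscaleL)
    also have "\<dots> \<le> cmod \<mu> * (C * q ^ n)"
      by (rule mult_left_mono[OF norm_U]) simp
    finally show ?thesis .
  qed
  ultimately have "summable Z"
    by (rule summable_comparison_test'[where N=0])
  have BH_Fn: "is_BH (opow F n)" for n
    by (rule is_BH_opow[OF BH])
  have ZG: "Z n o\<^sub>L G = U (Suc n) - U n" and GZ: "G o\<^sub>L Z n = U (Suc n) - U n" for n
    by (simp_all add: G_def Z_def U_def \<mu> bounded_bilinear.diff_left bounded_bilinear.diff_right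
        bounded_bilinear_blinfun_compose cscaleL_blinfun_compose blinfun_compose_cscaleL cscaleL_diff BH BH_Fn
        flip: opow_Suc opow_Suc')
  have BH_Z: "is_BH (Z n)" for n
    unfolding Z_def by (rule is_BH_cscaleL[OF BH_Fn])
  define S where "S = - suminf Z"
  have "U 0 = id_blinfun"
    by (simp add: U_def)
  from telescoping_suminf_inverse[OF \<open>summable Z\<close> \<open>U \<longlonglongrightarrow> 0\<close> this ZG GZ]
  have "S o\<^sub>L G = id_blinfun" "G o\<^sub>L S = id_blinfun"
    unfolding S_def .
  moreover have "is_BH S"
    unfolding S_def using \<open>summable Z\<close>
    by (intro is_BH_uminus is_BH_suminf) (simp_all add: BH_Z)
  ultimately have "l \<notin> op_spectrum F"
    by (intro not_in_op_spectrum) (simp_all add: G_def)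
  with l show False
    by contradiction
qed

subsection \<open>Spectra of power series of operators\<close>

text \<open>By Gelfand's formula, \<open>opow_growth_le T s\<close> says that \<open>r(T) \<le> s\<close>.\<close>

definition opow_growth_le :: "('a::real_normed_vector \<Rightarrow>\<^sub>L 'a) \<Rightarrow> real \<Rightarrow> bool" where
  "opow_growth_le T s \<longleftrightarrow> (\<forall>s'>s. \<exists>C. \<forall>k. norm (opow T k) \<le> C * s' ^ k)"

lemma op_spectrum_op_series_cmod_le:
  fixes T :: "'a::complex_hilbert \<Rightarrow>\<^sub>L 'a"
  assumes conv: "\<And>z. cmod z < R \<Longrightarrow> summable (\<lambda>n. a n * z ^ n)"
    and BH: "is_BH T" and s: "0 \<le> s" "s < R" and growth: "opow_growth_le T s"
    and l: "l \<in> op_spectrum (op_series a T)"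
  shows "cmod l \<le> abs_series a s"
proof -
  have le: "cmod l \<le> abs_series a s'" if s': "s < s'" "s' < R" for s'
  proof -
    obtain C where bound: "\<And>k. norm (opow T k) \<le> C * s' ^ k"
      using growth s'(1) unfolding opow_growth_le_def by blast
    have sa: "summable (\<lambda>k. cmod (a k) * s' ^ k)"
      using s s' by (intro summable_abs_series[OF conv]) auto
    have "norm (opow (op_series a T) n) \<le> C * abs_series a s' ^ n" for n
      using s s' by (intro norm_opow_op_series_le[OF BH bound _ sa]) auto
    moreover have "0 \<le> abs_series a s'"
      using s s' by (intro abs_series_nonneg[OF sa]) auto
    ultimately show ?thesis
      by (rule op_spectrum_cmod_le[OF is_BH_op_series[OF BH bound sa] _ _ l])
  qed
  have "(abs_series a \<longlongrightarrow> abs_series a s) (at_right s)"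
    using isContD[OF isCont_abs_series[OF conv s]] subset_UNIV by (rule tendsto_within_subset)
  moreover have "eventually (\<lambda>s'. cmod l \<le> abs_series a s') (at_right s)"
    using eventually_at_right_real[OF s(2)] by eventually_elim (auto intro: le)
  ultimately show ?thesis
    by (rule tendsto_lowerbound) simp
qed

lemma spectral_radius_le:
  assumes "0 \<le> X" and "\<And>l. l \<in> op_spectrum T \<Longrightarrow> cmod l \<le> X"
  shows "spectral_radius T \<le> X"
  unfolding spectral_radius_def using assms by (auto intro!: cSup_least)

lemma spectral_radius_op_series_le:
  fixes T :: "'a::complex_hilbert \<Rightarrow>\<^sub>L 'a"
  assumes conv: "\<And>z. cmod z < R \<Longrightarrow> summable (\<lambda>n. a n * z ^ n)"
    and BH: "is_BH T" and s: "0 \<le> s" "s < R" and growth: "opow_growth_le T s"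
  shows "spectral_radius (op_series a T) \<le> abs_series a s"
  using op_spectrum_op_series_cmod_le[OF conv BH s growth] abs_series_nonneg summable_abs_series[OF conv s] s
  by (intro spectral_radius_le) auto

lemma opow_growth_le_norm: "opow_growth_le T (norm T)"
  unfolding opow_growth_le_def
  by (auto intro!: exI[of _ 1] order_trans[OF norm_opow_le] power_mono)

lemma norm_opow_even_odd: "norm (opow T (2 * m + j)) \<le> norm (T o\<^sub>L T) ^ m * norm T ^ j"
proof -
  have "norm (opow T (2 * m + j)) \<le> norm (opow (T o\<^sub>L T) m) * norm (opow T j)"
    unfolding opow_add opow_mult2 by (rule norm_blinfun_compose)
  also have "\<dots> \<le> norm (T o\<^sub>L T) ^ m * norm T ^ j"
    by (intro mult_mono norm_opow_le) auto
  finally show ?thesis .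
qed

lemma opow_growth_le_compose:
  assumes comm: "A o\<^sub>L B = B o\<^sub>L A"
  shows "opow_growth_le (A o\<^sub>L B) (norm A * sqrt (norm (B o\<^sub>L B)))"
  unfolding opow_growth_le_def
proof (intro allI impI)
  fix r assume r: "norm A * sqrt (norm (B o\<^sub>L B)) < r"
  then have "0 < r"
    by (smt (verit) norm_ge_zero real_sqrt_ge_zero zero_le_mult_iff)
  define C where "C = max 1 (norm A * norm B / r)"
  have odd: "(norm A * norm B) ^ j \<le> C * r ^ j" if "j < 2" for j
  proof (cases "j = 0")
    case False
    with that have "j = 1"
      by simp
    have "norm A * norm B = r * (norm A * norm B / r)"
      using \<open>0 < r\<close> by simp
    also have "\<dots> \<le> r * C"
      using \<open>0 < r\<close> by (intro mult_left_mono) (simp_all add: C_def)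
    finally show ?thesis
      by (simp add: \<open>j = 1\<close> mult.commute)
  qed (simp add: C_def)
  show "\<exists>C. \<forall>k. norm (opow (A o\<^sub>L B) k) \<le> C * r ^ k"
  proof (intro exI[of _ C] allI)
    fix k :: nat
    define m j where "m = k div 2" and "j = k mod 2"
    have k: "k = 2 * m + j" and "j < 2"
      by (simp_all add: m_def j_def)
    have "norm (opow (A o\<^sub>L B) k) \<le> norm A ^ k * (norm (B o\<^sub>L B) ^ m * norm B ^ j)"
      unfolding opow_compose[OF comm]
      by (intro order_trans[OF norm_blinfun_compose] mult_mono norm_opow_le)
        (auto simp: k norm_opow_even_odd)
    also have "\<dots> = (norm A * sqrt (norm (B o\<^sub>L B))) ^ (2 * m) * (norm A * norm B) ^ j"
      by (simp add: k power_add power_mult_distrib power_mult)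
    also have "\<dots> \<le> r ^ (2 * m) * (C * r ^ j)"
      using r odd[OF \<open>j < 2\<close>]
      by (intro mult_mono power_mono) (auto simp: zero_le_mult_iff)
    also have "\<dots> = C * r ^ k"
      by (simp add: k power_add)
    finally show "norm (opow (A o\<^sub>L B) k) \<le> C * r ^ k" .
  qed
qed

theorem proposition3p1:
  fixes a :: "nat \<Rightarrow> complex" and R :: real
    and A B :: "'a::complex_hilbert \<Rightarrow>\<^sub>L 'a"
  assumes R_pos: "R > 0"
    and conv: "\<And>z. cmod z < R \<Longrightarrow> summable (\<lambda>n. a n * z ^ n)"
    and BH_A: "is_BH A" and BH_B: "is_BH B"
    and comm: "A o\<^sub>L B = B o\<^sub>L A"
    and nA: "norm A ^ 2 < R" and nB: "norm B ^ 2 < R"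
  shows
   "spectral_radius (op_series a (A o\<^sub>L B))
      \<le> 1/2 * abs_series a (norm (A o\<^sub>L B))
        + 1/2 * abs_series a (sqrt (norm A) * sqrt (norm B) * sqrt (norm (A o\<^sub>L B)))
    \<and> 1/2 * abs_series a (norm (A o\<^sub>L B))
        + 1/2 * abs_series a (sqrt (norm A) * sqrt (norm B) * sqrt (norm (A o\<^sub>L B)))
      \<le> 1/2 * abs_series a (norm (A o\<^sub>L B))
        + 1/2 * sqrt (abs_series a (norm A * norm B)) * sqrt (abs_series a (norm (A o\<^sub>L B)))
    \<and> spectral_radius (op_series a (A o\<^sub>L B))
      \<le> 1/2 * abs_series a (norm (A o\<^sub>L B))
        + 1/2 * min (abs_series a (norm A * sqrt (norm (B o\<^sub>L B))))
                    (abs_series a (sqrt (norm (A o\<^sub>L A)) * norm B))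
    \<and> 1/2 * abs_series a (norm (A o\<^sub>L B))
        + 1/2 * min (abs_series a (norm A * sqrt (norm (B o\<^sub>L B))))
                    (abs_series a (sqrt (norm (A o\<^sub>L A)) * norm B))
      \<le> 1/2 * abs_series a (norm (A o\<^sub>L B))
        + 1/2 * min (sqrt (abs_series a (norm A ^ 2)) * sqrt (abs_series a (norm (B o\<^sub>L B))))
                    (sqrt (abs_series a (norm (A o\<^sub>L A))) * sqrt (abs_series a (norm B ^ 2)))"
proof -
  let ?f = "abs_series a" and ?r = "spectral_radius (op_series a (A o\<^sub>L B))"
  have AB: "norm A * norm B < R"
    using nA nB by (intro mult_less_if_power2_less) auto
  have T: "norm (A o\<^sub>L B) \<le> norm A * norm B"
    by (rule norm_blinfun_compose)
  have r1: "norm A * sqrt (norm (B o\<^sub>L B)) \<le> norm A * norm B"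
    by (intro mult_left_mono sqrt_norm_compose_self_le) simp
  have r2: "sqrt (norm (A o\<^sub>L A)) * norm B \<le> norm A * norm B"
    by (intro mult_right_mono sqrt_norm_compose_self_le) simp
  have AA: "norm (A o\<^sub>L A) \<le> norm A ^ 2" and BB: "norm (B o\<^sub>L B) \<le> norm B ^ 2"
    by (simp_all add: power2_eq_square norm_blinfun_compose)
  have BH_AB: "is_BH (A o\<^sub>L B)" and BH_BA: "is_BH (B o\<^sub>L A)"
    by (simp_all add: is_BH_compose BH_A BH_B)
  have "?r \<le> ?f (norm (A o\<^sub>L B))"
    using T AB by (intro spectral_radius_op_series_le[OF conv BH_AB _ _ opow_growth_le_norm]) auto
  moreover have "?r \<le> ?f (norm A * sqrt (norm (B o\<^sub>L B)))"
    using r1 AB by (intro spectral_radius_op_series_le[OF conv BH_AB _ _ opow_growth_le_compose[OF comm]]) auto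
  moreover have "?r \<le> ?f (sqrt (norm (A o\<^sub>L A)) * norm B)"
    using spectral_radius_op_series_le[OF conv BH_BA _ _ opow_growth_le_compose[OF comm [symmetric]]] r2 AB
    by (simp add: comm mult.commute)
  moreover have "?f (norm (A o\<^sub>L B)) \<le> ?f (sqrt (norm A) * sqrt (norm B) * sqrt (norm (A o\<^sub>L B)))"
    using le_sqrt_mult_le[OF norm_ge_zero T] AB
    by (intro abs_series_mono[OF conv]) (auto simp: real_sqrt_mult)
  moreover have "?f (sqrt (norm A * norm B * norm (A o\<^sub>L B)))
      \<le> sqrt (?f (norm A * norm B)) * sqrt (?f (norm (A o\<^sub>L B)))"
    using T AB by (intro abs_series_sqrt_mult_le[OF conv]) auto
  moreover have "?f (sqrt (norm A ^ 2 * norm (B o\<^sub>L B)))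
      \<le> sqrt (?f (norm A ^ 2)) * sqrt (?f (norm (B o\<^sub>L B)))"
    using nA nB BB by (intro abs_series_sqrt_mult_le[OF conv]) auto
  moreover have "?f (sqrt (norm (A o\<^sub>L A) * norm B ^ 2))
      \<le> sqrt (?f (norm (A o\<^sub>L A))) * sqrt (?f (norm B ^ 2))"
    using nA nB AA by (intro abs_series_sqrt_mult_le[OF conv]) auto
  ultimately show ?thesis
    by (auto simp: min_def real_sqrt_mult)
qed

end
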